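(* Let $\Sigma=\{a,b,c\}$ and let $\mathfrak{A}$ be the architecture with $\mathsf{Procs}=\{p_1,p_2\}$, $\mathsf{DS}=\mathsf{Queues}=\{c_1,c_2\}$ (no stacks, no bags), $\mathsf{Writer}(c_1)=\mathsf{Reader}(c_2)=p_1$ and $\mathsf{Writer}(c_2)=\mathsf{Reader}(c_1)=p_2$. There is a sentence $\varphi\in\mathsf{MSO}(\mathfrak{A},\Sigma)$ such that for every CPDS $\mathcal{S}$ over $\mathfrak{A}$ and $\Sigma$ we have $L(\mathcal{S})\neq L(\varphi)$.
   Context: An architecture is $\mathfrak{A}=(\mathsf{Procs},\mathsf{DS},\mathsf{Writer},\mathsf{Reader})$ with $\mathsf{DS}=\mathsf{Stacks}\uplus\mathsf{Queues}\uplus\mathsf{Bags}$ and $\mathsf{Writer},\mathsf{Reader}:\mathsf{DS}\to\mathsf{Procs}$. A CBM over $\mathfrak{A}$ and $\Sigma$ is $\mathcal{M}=((w_p)_{p\in\mathsf{Procs}},(\rhd^d)_{d\in\mathsf{DS}})$ with $w_p\in\Sigma^*$; events $\mathcal{E}=\bigcup_p\{(p,i)\mid1\le i\le|w_p|\}$, process successor $(p,i)\to(p,i+1)$, $\mathsf{pid}((p,i))=p$, $\lambda((p,i))$ the $i$-th letter of $w_p$; $\rhd^d\subseteq\mathcal{E}_{\mathsf{Writer}(d)}\times\mathcal{E}_{\mathsf{Reader}(d)}$ such that distinct edges (over all $d$) have four distinct endpoints, $<=(\to\cup\bigcup_d\rhd^d)^+$ is a strict partial order, and for each queue $d$, $e_1\rhd^d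 f_1$, $e_2\rhd^d f_2$, $e_1<e_2$ imply $f_1<f_2$ (and for stacks, $e_1<e_2<f_1$ implies $f_2<f_1$). A CPDS $\mathcal{S}=(\mathsf{Locs},\mathsf{Val},(\to_p)_p,\ell_{in},\mathsf{Fin})$ has nonempty finite $\mathsf{Locs},\mathsf{Val}$, $\ell_{in}\in\mathsf{Locs}$, $\mathsf{Fin}\subseteq\mathsf{Locs}^{\mathsf{Procs}}$ and finite transition sets $\to_p$ with transitions $\ell\xrightarrow{a}_p\ell'$, $\ell\xrightarrow{a,d!v}_p\ell'$ ($\mathsf{Writer}(d)=p$), $\ell\xrightarrow{a,d?v}_p\ell'$ ($\mathsf{Reader}(d)=p$). A run on a CBM is $\rho:\mathcal{E}\to\mathsf{Locs}$ such that, with $\rho^-(e)$ the value of $\rho$ at the $\to$-predecessor of $e$ or $\ell_{in}$ if none: events incident to no $\rhd$-edge use an internal transition $\rho^-(e)\xrightarrow{\lambda(e)}_{\mathsf{pid}(e)}\rho(e)$, and for each $e\rhd^d f$ some $v$ gives transitions $\rho^-(e)\xrightarrow{\lambda(e),d!v}\rho(e)$ and $\rho^-(f)\xrightarrow{\lambda(f),d?v}\rho(f)$. It is accepting if the tuple of last locations of each process ($\ell_{in}$ for processes with no events) is in $\mathsf{Fin}$. $L(\mathcal{S})$ = CBMs with an accepting run. $\mathsf{MSO}(\mathfrak{A},\Sigma)$: $\varphi::=a(x)\mid p(x)\mid x=y\mid x\rhd^d y\mid x\to y\mid x\in X\mid\varphi\vee\varphi\mid\neg\varphi\mid\exists x\varphi\mid\exists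 X\varphi$, interpreted over CBMs in the standard way ($a(x)$: $\lambda(x)=a$; $p(x)$: $\mathsf{pid}(x)=p$). $L(\varphi)$ is the set of CBMs satisfying sentence $\varphi$. *)

theory Defs
  imports Main
begin

datatype proc = P1 | P2
datatype ds = C1 | C2   (* both data structures are queues *)
datatype sym = A | B | C

fun writer :: "ds \<Rightarrow> proc" where
  "writer C1 = P1" | "writer C2 = P2"
fun reader :: "ds \<Rightarrow> proc" where
  "reader C1 = P2" | "reader C2 = P1"

type_synonym event = "proc \<times> nat"   (* (p,i) with 1 <= i <= |w_p| *)

type_synonym cbm = "(proc \<Rightarrow> sym list) \<times> (ds \<Rightarrow> (event \<times> event) set)"

definition words :: "cbm \<Rightarrow> proc \<Rightarrow> sym list" where "words M = fst M"
definition edges :: "cbm \<Rightarrow> ds \<Rightarrow> (event \<times> event) set" where "edges M = snd M"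

definition events :: "cbm \<Rightarrow> event set" where
  "events M = {(p,i). 1 \<le> i \<and> i \<le> length (words M p)}"

definition events_of :: "cbm \<Rightarrow> proc \<Rightarrow> event set" where
  "events_of M p = {e \<in> events M. fst e = p}"

definition lab :: "cbm \<Rightarrow> event \<Rightarrow> sym" where
  "lab M e = words M (fst e) ! (snd e - 1)"

definition proc_succ :: "cbm \<Rightarrow> (event \<times> event) set" where
  "proc_succ M = {(e,f). e \<in> events M \<and> f \<in> events M \<and> fst f = fst e \<and> snd f = snd e + 1}"

definition cbm_less :: "cbm \<Rightarrow> (event \<times> event) set" where
  "cbm_less M = (proc_succ M \<union> (\<Union>d. edges M d))\<^sup>+"

definition is_cbm :: "cbm \<Rightarrow> bool" where
  "is_cbm M \<longleftrightarrow>
     (\<forall>d. edges M d \<subseteq> events_of M (writer d) \<times> events_of M (reader d)) \<and>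
     (\<forall>d d' e f e' f'. (e,f) \<in> edges M d \<and> (e',f') \<in> edges M d' \<and> (d,e,f) \<noteq> (d',e',f')
        \<longrightarrow> e \<noteq> e' \<and> e \<noteq> f' \<and> f \<noteq> e' \<and> f \<noteq> f') \<and>
     (\<forall>e. (e,e) \<notin> cbm_less M) \<and>
     (\<forall>d e1 f1 e2 f2. (e1,f1) \<in> edges M d \<and> (e2,f2) \<in> edges M d \<and> (e1,e2) \<in> cbm_less M
        \<longrightarrow> (f1,f2) \<in> cbm_less M)"

text \<open>Locations and values are represented by natural numbers; Locs and Val are
  finite nonempty sets of naturals (every finite set is in bijection with such a set).\<close>

datatype act = Internal | Send ds nat | Recv ds nat

type_synonym transition = "nat \<times> sym \<times> act \<times> nat"

record cpds =
  locs :: "nat set"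
  vals :: "nat set"
  trans :: "proc \<Rightarrow> transition set"
  init :: nat
  fin :: "(proc \<Rightarrow> nat) set"

definition is_cpds :: "cpds \<Rightarrow> bool" where
  "is_cpds S \<longleftrightarrow>
     finite (locs S) \<and> locs S \<noteq> {} \<and> finite (vals S) \<and> vals S \<noteq> {} \<and>
     init S \<in> locs S \<and> fin S \<subseteq> {f. \<forall>p. f p \<in> locs S} \<and>
     (\<forall>p. finite (trans S p)) \<and>
     (\<forall>p l a act l'. (l,a,act,l') \<in> trans S p \<longrightarrow>
        l \<in> locs S \<and> l' \<in> locs S \<and>
        (\<forall>d v. act = Send d v \<longrightarrow> writer d = p \<and> v \<in> vals S) \<and>
        (\<forall>d v. act = Recv d v \<longrightarrow> reader d = p \<and> v \<in> vals S))"

definition pre_loc :: "cpds \<Rightarrow> (event \<Rightarrow> nat) \<Rightarrow> event \<Rightarrow> nat" where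
  "pre_loc S \<rho> e = (if snd e = 1 then init S else \<rho> (fst e, snd e - 1))"

definition is_run :: "cpds \<Rightarrow> cbm \<Rightarrow> (event \<Rightarrow> nat) \<Rightarrow> bool" where
  "is_run S M \<rho> \<longleftrightarrow>
     (\<forall>e \<in> events M. \<rho> e \<in> locs S) \<and>
     (\<forall>e \<in> events M. (\<nexists>d f. (e,f) \<in> edges M d \<or> (f,e) \<in> edges M d) \<longrightarrow>
        (pre_loc S \<rho> e, lab M e, Internal, \<rho> e) \<in> trans S (fst e)) \<and>
     (\<forall>d e f. (e,f) \<in> edges M d \<longrightarrow>
        (\<exists>v. (pre_loc S \<rho> e, lab M e, Send d v, \<rho> e) \<in> trans S (fst e) \<and>
             (pre_loc S \<rho> f, lab M f, Recv d v, \<rho> f) \<in> trans S (fst f)))"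

definition accepting :: "cpds \<Rightarrow> cbm \<Rightarrow> (event \<Rightarrow> nat) \<Rightarrow> bool" where
  "accepting S M \<rho> \<longleftrightarrow>
     (\<lambda>p. if words M p = [] then init S else \<rho> (p, length (words M p))) \<in> fin S"

definition lang_cpds :: "cpds \<Rightarrow> cbm set" where
  "lang_cpds S = {M. is_cbm M \<and> (\<exists>\<rho>. is_run S M \<rho> \<and> accepting S M \<rho>)}"

text \<open>First-order and second-order variables are natural numbers (separate name spaces).\<close>

datatype mso =
    Lab sym nat
  | Pid proc nat
  | Eq nat nat
  | Edge ds nat nat
  | Succ nat nat
  | Mem nat nat
  | Or mso mso
  | Neg mso
  | Ex1 nat mso
  | Ex2 nat mso

primrec fv1 :: "mso \<Rightarrow> nat set" where
  "fv1 (Lab a x) = {x}"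
| "fv1 (Pid p x) = {x}"
| "fv1 (Eq x y) = {x, y}"
| "fv1 (Edge d x y) = {x, y}"
| "fv1 (Succ x y) = {x, y}"
| "fv1 (Mem x X) = {x}"
| "fv1 (Or \<phi> \<psi>) = fv1 \<phi> \<union> fv1 \<psi>"
| "fv1 (Neg \<phi>) = fv1 \<phi>"
| "fv1 (Ex1 x \<phi>) = fv1 \<phi> - {x}"
| "fv1 (Ex2 X \<phi>) = fv1 \<phi>"

primrec fv2 :: "mso \<Rightarrow> nat set" where
  "fv2 (Lab a x) = {}"
| "fv2 (Pid p x) = {}"
| "fv2 (Eq x y) = {}"
| "fv2 (Edge d x y) = {}"
| "fv2 (Succ x y) = {}"
| "fv2 (Mem x X) = {X}"
| "fv2 (Or \<phi> \<psi>) = fv2 \<phi> \<union> fv2 \<psi>"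
| "fv2 (Neg \<phi>) = fv2 \<phi>"
| "fv2 (Ex1 x \<phi>) = fv2 \<phi>"
| "fv2 (Ex2 X \<phi>) = fv2 \<phi> - {X}"

definition sentence :: "mso \<Rightarrow> bool" where
  "sentence \<phi> \<longleftrightarrow> fv1 \<phi> = {} \<and> fv2 \<phi> = {}"

primrec sat :: "cbm \<Rightarrow> (nat \<Rightarrow> event) \<Rightarrow> (nat \<Rightarrow> event set) \<Rightarrow> mso \<Rightarrow> bool" where
  "sat M \<nu> \<mu> (Lab a x) = (lab M (\<nu> x) = a)"
| "sat M \<nu> \<mu> (Pid p x) = (fst (\<nu> x) = p)"
| "sat M \<nu> \<mu> (Eq x y) = (\<nu> x = \<nu> y)"
| "sat M \<nu> \<mu> (Edge d x y) = ((\<nu> x, \<nu> y) \<in> edges M d)"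
| "sat M \<nu> \<mu> (Succ x y) = ((\<nu> x, \<nu> y) \<in> proc_succ M)"
| "sat M \<nu> \<mu> (Mem x X) = (\<nu> x \<in> \<mu> X)"
| "sat M \<nu> \<mu> (Or \<phi> \<psi>) = (sat M \<nu> \<mu> \<phi> \<or> sat M \<nu> \<mu> \<psi>)"
| "sat M \<nu> \<mu> (Neg \<phi>) = (\<not> sat M \<nu> \<mu> \<phi>)"
| "sat M \<nu> \<mu> (Ex1 x \<phi>) = (\<exists>e \<in> events M. sat M (\<nu>(x := e)) \<mu> \<phi>)"
| "sat M \<nu> \<mu> (Ex2 X \<phi>) = (\<exists>E \<subseteq> events M. sat M \<nu> (\<mu>(X := E)) \<phi>)"

definition lang_mso :: "mso \<Rightarrow> cbm set" where
  "lang_mso \<phi> = {M. is_cbm M \<and> (\<forall>\<nu> \<mu>. sat M \<nu> \<mu> \<phi>)}"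

end

theory Submission
  imports Defs "HOL-Library.FuncSet"
begin

text \<open>The formula says that no event labelled \<open>A\<close> and event labelled \<open>B\<close> sit at transposed
  positions of a grid, where positions are linked along columns by a message followed by a
  process step, along rows by two process steps within a block, and transposition is witnessed
  by the diagonal cells (labelled \<open>C\<close>).  On the grid CBMs encoding a \<open>4h \<times> 4h\<close> matrix it
  therefore holds exactly for the symmetric matrices.

  A run of a CPDS with \<open>a\<close> locations and \<open>b\<close> values carries across the cut between the upper
  and the lower half of a grid only its two current locations and the values of the messages in
  transit: at most \<open>a^2 * b^(8h)\<close> configurations, against \<open>2^(4h^2)\<close> choices of the upper right
  quadrant of a symmetric matrix.  For \<open>h = 2(a + b)\<close> two symmetric grids with different quadrants
  share a cut configuration, and gluing the upper half of one accepting run to the lower half of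
  the other gives an accepting run on an asymmetric grid.\<close>

section \<open>The symmetry formula\<close>

definition mso_and :: "mso \<Rightarrow> mso \<Rightarrow> mso" where
  "mso_and \<phi> \<psi> = Neg (Or (Neg \<phi>) (Neg \<psi>))"

definition mso_imp :: "mso \<Rightarrow> mso \<Rightarrow> mso" where
  "mso_imp \<phi> \<psi> = Or (Neg \<phi>) \<psi>"

definition mso_all1 :: "nat \<Rightarrow> mso \<Rightarrow> mso" where
  "mso_all1 x \<phi> = Neg (Ex1 x (Neg \<phi>))"

definition mso_all2 :: "nat \<Rightarrow> mso \<Rightarrow> mso" where
  "mso_all2 X \<phi> = Neg (Ex2 X (Neg \<phi>))"

definition mso_true :: mso where
  "mso_true = mso_all1 0 (Eq 0 0)"

definition mso_conj :: "mso list \<Rightarrow> mso" where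
  "mso_conj \<phi>s = foldr mso_and \<phi>s mso_true"

lemma sat_mso_connectives [simp]:
  "sat M \<nu> \<mu> (mso_and \<phi> \<psi>) \<longleftrightarrow> sat M \<nu> \<mu> \<phi> \<and> sat M \<nu> \<mu> \<psi>"
  "sat M \<nu> \<mu> (mso_imp \<phi> \<psi>) \<longleftrightarrow> (sat M \<nu> \<mu> \<phi> \<longrightarrow> sat M \<nu> \<mu> \<psi>)"
  "sat M \<nu> \<mu> (mso_all1 x \<phi>) \<longleftrightarrow> (\<forall>e\<in>events M. sat M (\<nu>(x := e)) \<mu> \<phi>)"
  "sat M \<nu> \<mu> (mso_all2 X \<phi>) \<longleftrightarrow> (\<forall>E\<subseteq>events M. sat M \<nu> (\<mu>(X := E)) \<phi>)"
  "sat M \<nu> \<mu> mso_true"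
  by (auto simp: mso_and_def mso_imp_def mso_all1_def mso_all2_def mso_true_def)

lemma fv_mso_connectives [simp]:
  "fv1 (mso_and \<phi> \<psi>) = fv1 \<phi> \<union> fv1 \<psi>" "fv2 (mso_and \<phi> \<psi>) = fv2 \<phi> \<union> fv2 \<psi>"
  "fv1 (mso_imp \<phi> \<psi>) = fv1 \<phi> \<union> fv1 \<psi>" "fv2 (mso_imp \<phi> \<psi>) = fv2 \<phi> \<union> fv2 \<psi>"
  "fv1 (mso_all1 x \<phi>) = fv1 \<phi> - {x}" "fv2 (mso_all1 x \<phi>) = fv2 \<phi>"
  "fv1 (mso_all2 X \<phi>) = fv1 \<phi>" "fv2 (mso_all2 X \<phi>) = fv2 \<phi> - {X}"
  "fv1 mso_true = {}" "fv2 mso_true = {}"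
  by (auto simp: mso_and_def mso_imp_def mso_all1_def mso_all2_def mso_true_def)

lemma sat_mso_conj [simp]: "sat M \<nu> \<mu> (mso_conj \<phi>s) \<longleftrightarrow> (\<forall>\<phi>\<in>set \<phi>s. sat M \<nu> \<mu> \<phi>)"
  by (induction \<phi>s) (simp_all add: mso_conj_def)

lemma fv_mso_conj [simp]:
  "fv1 (mso_conj \<phi>s) = (\<Union>\<phi>\<in>set \<phi>s. fv1 \<phi>)" "fv2 (mso_conj \<phi>s) = (\<Union>\<phi>\<in>set \<phi>s. fv2 \<phi>)"
  by (induction \<phi>s) (simp_all add: mso_conj_def)

text \<open>The step formula \<open>st\<close> relates the first-order variables 4 and 5; the set variable 0
  ranges over the \<open>st\<close>-closed sets containing \<open>a\<close>.\<close>

definition mso_rtrancl :: "mso \<Rightarrow> nat \<Rightarrow> nat \<Rightarrow> mso" where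
  "mso_rtrancl st a b =
     mso_all2 0 (mso_imp
       (mso_and (Mem a 0) (mso_all1 4 (mso_all1 5 (mso_imp (mso_and (Mem 4 0) st) (Mem 5 0)))))
       (Mem b 0))"

definition comparable :: "('a \<times> 'a) set \<Rightarrow> 'a \<Rightarrow> 'a \<Rightarrow> bool" where
  "comparable R x y \<longleftrightarrow> (x, y) \<in> R\<^sup>* \<or> (y, x) \<in> R\<^sup>*"

definition mso_comparable :: "mso \<Rightarrow> nat \<Rightarrow> nat \<Rightarrow> mso" where
  "mso_comparable st a b = Or (mso_rtrancl st a b) (mso_rtrancl st b a)"

lemma sat_mso_rtrancl:
  assumes st: "\<And>\<nu> \<mu>. \<nu> 4 \<in> events M \<Longrightarrow> \<nu> 5 \<in> events M \<Longrightarrow> sat M \<nu> \<mu> st \<longleftrightarrow> (\<nu> 4, \<nu> 5) \<in> R"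
    and R: "R \<subseteq> events M \<times> events M"
    and ab: "a \<notin> {4, 5}" "b \<notin> {4, 5}" and a: "\<nu> a \<in> events M"
  shows "sat M \<nu> \<mu> (mso_rtrancl st a b) \<longleftrightarrow> (\<nu> a, \<nu> b) \<in> R\<^sup>*"
proof -
  have "sat M \<nu> \<mu> (mso_rtrancl st a b) \<longleftrightarrow>
      (\<forall>E\<subseteq>events M. \<nu> a \<in> E \<and> (\<forall>e\<in>events M. \<forall>f\<in>events M. e \<in> E \<and> (e, f) \<in> R \<longrightarrow> f \<in> E)
         \<longrightarrow> \<nu> b \<in> E)"
    using ab by (simp add: mso_rtrancl_def st)
  also have "\<dots> \<longleftrightarrow> (\<nu> a, \<nu> b) \<in> R\<^sup>*"
  proof
    assume closed: "\<forall>E\<subseteq>events M. \<nu> a \<in> E \<and>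
      (\<forall>e\<in>events M. \<forall>f\<in>events M. e \<in> E \<and> (e, f) \<in> R \<longrightarrow> f \<in> E) \<longrightarrow> \<nu> b \<in> E"
    have "\<nu> b \<in> {f \<in> events M. (\<nu> a, f) \<in> R\<^sup>*}"
      using a by (intro closed[rule_format]) (auto intro: rtrancl_into_rtrancl)
    then show "(\<nu> a, \<nu> b) \<in> R\<^sup>*" by simp
  next
    assume "(\<nu> a, \<nu> b) \<in> R\<^sup>*"
    then show "\<forall>E\<subseteq>events M. \<nu> a \<in> E \<and>
      (\<forall>e\<in>events M. \<forall>f\<in>events M. e \<in> E \<and> (e, f) \<in> R \<longrightarrow> f \<in> E) \<longrightarrow> \<nu> b \<in> E"
      using R by (induction rule: rtrancl_induct) blast+
  qed
  finally show ?thesis .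
qed

lemma sat_mso_comparable:
  assumes "\<And>\<nu> \<mu>. \<nu> 4 \<in> events M \<Longrightarrow> \<nu> 5 \<in> events M \<Longrightarrow> sat M \<nu> \<mu> st \<longleftrightarrow> (\<nu> 4, \<nu> 5) \<in> R"
    and "R \<subseteq> events M \<times> events M"
    and "a \<notin> {4, 5}" "b \<notin> {4, 5}" "\<nu> a \<in> events M" "\<nu> b \<in> events M"
  shows "sat M \<nu> \<mu> (mso_comparable st a b) \<longleftrightarrow> comparable R (\<nu> a) (\<nu> b)"
  using sat_mso_rtrancl[OF assms(1,2)] assms(3-) by (simp add: mso_comparable_def comparable_def)

definition vert_step :: "cbm \<Rightarrow> (event \<times> event) set" where
  "vert_step M = {(e, f). e \<in> events M \<and> f \<in> events M \<and>
     (\<exists>m\<in>events M. (\<exists>d. (e, m) \<in> edges M d) \<and> (m, f) \<in> proc_succ M)}"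

definition horiz_step :: "cbm \<Rightarrow> (event \<times> event) set" where
  "horiz_step M = {(e, f). e \<in> events M \<and> f \<in> events M \<and>
     (\<exists>m\<in>events M. (e, m) \<in> proc_succ M \<and> (m, f) \<in> proc_succ M \<and> lab M m \<noteq> B)}"

definition vert_step_formula :: mso where
  "vert_step_formula = Ex1 6 (mso_and (Or (Edge C1 4 6) (Edge C2 4 6)) (Succ 6 5))"

definition horiz_step_formula :: mso where
  "horiz_step_formula = Ex1 6 (mso_and (Succ 4 6) (mso_and (Succ 6 5) (Neg (Lab B 6))))"

lemma ex_ds: "(\<exists>d. P d) \<longleftrightarrow> P C1 \<or> P C2"
  by (metis ds.exhaust)

lemma sat_vert_step_formula:
  "\<nu> 4 \<in> events M \<Longrightarrow> \<nu> 5 \<in> events M \<Longrightarrow>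
     sat M \<nu> \<mu> vert_step_formula \<longleftrightarrow> (\<nu> 4, \<nu> 5) \<in> vert_step M"
  by (auto simp: vert_step_formula_def vert_step_def ex_ds)

lemma sat_horiz_step_formula:
  "\<nu> 4 \<in> events M \<Longrightarrow> \<nu> 5 \<in> events M \<Longrightarrow>
     sat M \<nu> \<mu> horiz_step_formula \<longleftrightarrow> (\<nu> 4, \<nu> 5) \<in> horiz_step M"
  by (auto simp: horiz_step_formula_def horiz_step_def)

text \<open>In a grid, \<open>vert_step\<close> moves down a column and \<open>horiz_step\<close> along a row, so \<open>x\<close>, \<open>y\<close>,
  \<open>z\<close>, \<open>z'\<close> are the cells \<open>(i, j)\<close>, \<open>(j, i)\<close>, \<open>(j, j)\<close>, \<open>(i, i)\<close>.\<close>

definition transposed_pair :: "cbm \<Rightarrow> event \<Rightarrow> event \<Rightarrow> event \<Rightarrow> event \<Rightarrow> bool" where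
  "transposed_pair M x y z z' \<longleftrightarrow>
     lab M x = A \<and> lab M y = B \<and> lab M z = C \<and> lab M z' = C \<and>
     comparable (vert_step M) x z \<and> comparable (horiz_step M) y z \<and>
     comparable (vert_step M) y z' \<and> comparable (horiz_step M) x z'"

definition symmetry_formula :: mso where
  "symmetry_formula = Neg (Ex1 0 (Ex1 1 (Ex1 2 (Ex1 3 (mso_conj
     [Lab A 0, Lab B 1, Lab C 2, Lab C 3,
      mso_comparable vert_step_formula 0 2, mso_comparable horiz_step_formula 1 2,
      mso_comparable vert_step_formula 1 3, mso_comparable horiz_step_formula 0 3])))))"

lemma sentence_symmetry_formula: "sentence symmetry_formula"
  by (auto simp: sentence_def symmetry_formula_def mso_comparable_def mso_rtrancl_def
      vert_step_formula_def horiz_step_formula_def)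

lemma sat_symmetry_formula:
  "sat M \<nu> \<mu> symmetry_formula \<longleftrightarrow>
     \<not> (\<exists>x\<in>events M. \<exists>y\<in>events M. \<exists>z\<in>events M. \<exists>z'\<in>events M. transposed_pair M x y z z')"
proof -
  have vert: "vert_step M \<subseteq> events M \<times> events M" and horiz: "horiz_step M \<subseteq> events M \<times> events M"
    by (auto simp: vert_step_def horiz_step_def)
  show ?thesis
    by (simp add: symmetry_formula_def transposed_pair_def
        sat_mso_comparable[OF sat_vert_step_formula vert]
        sat_mso_comparable[OF sat_horiz_step_formula horiz])
qed

section \<open>Grids\<close>

text \<open>The grid CBM with \<open>4h\<close> rows and \<open>4h\<close> columns whose off-diagonal cell \<open>(r, j)\<close>
  carries \<open>D r j\<close> and whose diagonal cells carry \<open>C\<close>.  Process \<open>P1\<close> holds the even rows,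
  \<open>P2\<close> the odd ones, each as \<open>2h\<close> blocks of \<open>8h\<close> events.  Inside a block, cell \<open>j\<close> sits at
  the even offset \<open>2j + 2\<close>; the odd offsets are separators, labelled \<open>B\<close> at the start of a
  block and \<open>A\<close> otherwise.  A message links each cell to the separator just before the cell
  below it: \<open>C1\<close> from row \<open>2t\<close> to row \<open>2t + 1\<close>, \<open>C2\<close> from row \<open>2t + 1\<close> to row \<open>2t + 2\<close>.\<close>

definition grid_len :: "nat \<Rightarrow> nat" where
  "grid_len h = 2 * h * (8 * h)"

definition grid_row :: "nat \<Rightarrow> event \<Rightarrow> nat" where
  "grid_row h e = 2 * ((snd e - 1) div (8 * h)) + (if fst e = P1 then 0 else 1)"

definition grid_col :: "nat \<Rightarrow> event \<Rightarrow> nat" where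
  "grid_col h e = (snd e - 1) mod (8 * h) div 2"

definition grid_label :: "nat \<Rightarrow> (nat \<Rightarrow> nat \<Rightarrow> sym) \<Rightarrow> event \<Rightarrow> sym" where
  "grid_label h D e =
     (if odd (snd e) then (if (snd e - 1) mod (8 * h) = 0 then B else A)
      else if grid_row h e = grid_col h e then C else D (grid_row h e) (grid_col h e))"

definition grid_edges :: "nat \<Rightarrow> ds \<Rightarrow> (event \<times> event) set" where
  "grid_edges h d = (case d of
     C1 \<Rightarrow> {((P1, n), (P2, n - 1)) | n. even n \<and> 2 \<le> n \<and> n \<le> grid_len h}
   | C2 \<Rightarrow> {((P2, n), (P1, n + 8 * h - 1)) | n. even n \<and> 2 \<le> n \<and> n + 8 * h \<le> grid_len h})"

definition grid :: "nat \<Rightarrow> (nat \<Rightarrow> nat \<Rightarrow> sym) \<Rightarrow> cbm" where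
  "grid h D = (\<lambda>p. map (\<lambda>n. grid_label h D (p, n)) [1..<grid_len h + 1], grid_edges h)"

lemma words_grid: "words (grid h D) p = map (\<lambda>n. grid_label h D (p, n)) [1..<grid_len h + 1]"
  by (simp add: words_def grid_def)

lemma edges_grid [simp]: "edges (grid h D) = grid_edges h"
  by (simp add: edges_def grid_def)

lemma events_grid: "events (grid h D) = {(p, n). 1 \<le> n \<and> n \<le> grid_len h}"
  by (auto simp: events_def words_grid)

lemma lab_grid: "e \<in> events (grid h D) \<Longrightarrow> lab (grid h D) e = grid_label h D e"
  by (auto simp del: upt_Suc simp: lab_def words_grid events_grid)

lemma proc_succ_grid:
  "proc_succ (grid h D) = {((p, n), (p, n + 1)) | p n. 1 \<le> n \<and> n + 1 \<le> grid_len h}"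
  by (auto simp: proc_succ_def events_grid)

lemma grid_edges_C1:
  "(e, f) \<in> grid_edges h C1 \<longleftrightarrow> (\<exists>n. e = (P1, n) \<and> f = (P2, n - 1) \<and> even n \<and> 2 \<le> n \<and> n \<le> grid_len h)"
  by (auto simp: grid_edges_def)

lemma grid_edges_C2:
  "(e, f) \<in> grid_edges h C2 \<longleftrightarrow>
     (\<exists>n. e = (P2, n) \<and> f = (P1, n + 8 * h - 1) \<and> even n \<and> 2 \<le> n \<and> n + 8 * h \<le> grid_len h)"
  by (auto simp: grid_edges_def)

lemma UN_ds: "(\<Union>d. F d) = F C1 \<union> F C2"
  using ex_ds[of "\<lambda>d. _ \<in> F d"] by blast

lemma proc_succ_less:
  assumes m: "(p, m) \<in> events M" and "(p, n) \<in> events M" "m < n"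
  shows "((p, m), (p, n)) \<in> cbm_less M"
  using assms(2,3)
proof (induction n)
  case (Suc n)
  have n: "(p, n) \<in> events M" and succ: "((p, n), (p, Suc n)) \<in> proc_succ M"
    using Suc.prems m by (auto simp: events_def proc_succ_def)
  show ?case
  proof (cases "m = n")
    case True
    with succ show ?thesis by (simp add: cbm_less_def r_into_trancl')
  next
    case False
    with Suc n have "((p, m), (p, n)) \<in> cbm_less M" by simp
    with succ show ?thesis unfolding cbm_less_def by (meson UnI1 trancl_into_trancl)
  qed
qed simp

definition grid_rank :: "event \<Rightarrow> nat" where
  "grid_rank e = 2 * snd e + (if fst e = P1 then 0 else 3)"

lemma grid_rank_less:
  assumes h: "0 < h" and "(e, f) \<in> cbm_less (grid h D)"
  shows "grid_rank e < grid_rank f"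
proof -
  have step: "grid_rank e < grid_rank f"
    if "(e, f) \<in> proc_succ (grid h D) \<union> (grid_edges h C1 \<union> grid_edges h C2)" for e f
    using that h
    by (auto simp: proc_succ_grid grid_edges_C1 grid_edges_C2 grid_rank_def)
  from assms(2) show ?thesis
    unfolding cbm_less_def edges_grid UN_ds
    by (induction rule: trancl_induct) (use step less_trans in blast)+
qed

lemma grid_edge_parity:
  assumes "0 < h" "(e, f) \<in> grid_edges h d"
  shows "even (snd e) \<and> odd (snd f)"
  using assms by (cases d) (auto simp: grid_edges_C1 grid_edges_C2)

lemma is_cbm_grid:
  assumes h: "0 < h"
  shows "is_cbm (grid h D)"
proof -
  let ?M = "grid h D"
  have endpoints: "edges ?M d \<subseteq> events_of ?M (writer d) \<times> events_of ?M (reader d)" for d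
    by (cases d) (auto simp: grid_edges_C1 grid_edges_C2 events_of_def events_grid)
  have disjoint: "e \<noteq> e' \<and> e \<noteq> f' \<and> f \<noteq> e' \<and> f \<noteq> f'"
    if edges: "(e, f) \<in> edges ?M d" "(e', f') \<in> edges ?M d'" "(d, e, f) \<noteq> (d', e', f')"
    for d d' e f e' f'
  proof -
    have "e \<noteq> f' \<and> f \<noteq> e'"
      using grid_edge_parity[OF h] edges(1,2) by (metis edges_grid)
    with edges show ?thesis
      by (cases d; cases d') (auto simp: grid_edges_C1 grid_edges_C2)
  qed
  have irreflexive: "(e, e) \<notin> cbm_less ?M" for e
    using grid_rank_less[OF h] by blast
  have fifo: "(f1, f2) \<in> cbm_less ?M"
    if edges: "(e1, f1) \<in> edges ?M d" "(e2, f2) \<in> edges ?M d" and less: "(e1, e2) \<in> cbm_less ?M"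
    for d e1 f1 e2 f2
  proof -
    have "grid_rank e1 < grid_rank e2"
      using grid_rank_less[OF h less] .
    with edges show ?thesis
      by (cases d)
        (auto simp: grid_edges_C1 grid_edges_C2 grid_rank_def events_grid intro!: proc_succ_less)
  qed
  show ?thesis
    unfolding is_cbm_def using endpoints disjoint irreflexive fifo by blast
qed

lemma lab_grid_C_diagonal:
  assumes "\<And>r j. D r j \<noteq> C" "e \<in> events (grid h D)" "lab (grid h D) e = C"
  shows "even (snd e) \<and> grid_row h e = grid_col h e"
  using assms by (auto simp: lab_grid grid_label_def split: if_splits)

lemma lab_grid_even_position:
  assumes "e \<in> events (grid h D)" "even (snd e)" "lab (grid h D) e \<noteq> C"
  shows "lab (grid h D) e = D (grid_row h e) (grid_col h e)"
  using assms by (auto simp: lab_grid grid_label_def split: if_splits)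

lemma vert_step_grid:
  assumes "0 < h" "(e, f) \<in> vert_step (grid h D)"
  shows "even (snd e) \<and> even (snd f) \<and> grid_col h f = grid_col h e"
proof -
  obtain d m where edge: "(e, m) \<in> grid_edges h d" and succ: "(m, f) \<in> proc_succ (grid h D)"
    using assms(2) by (auto simp: vert_step_def)
  show ?thesis
  proof (cases d)
    case C1
    with edge succ show ?thesis
      by (auto simp: grid_edges_C1 proc_succ_grid grid_col_def)
  next
    case C2
    with edge obtain n where n: "e = (P2, n)" "m = (P1, n + 8 * h - 1)" "even n" "2 \<le> n"
      by (auto simp: grid_edges_C2)
    with succ assms(1) have "f = (P1, n + 8 * h)"
      by (auto simp: proc_succ_grid)
    moreover have "(n + 8 * h - 1) mod (8 * h) = (n - 1) mod (8 * h)"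
      using n(4) by (simp add: add.commute[of _ "8 * h"] flip: Nat.add_diff_assoc)
    ultimately show ?thesis
      using n by (simp add: grid_col_def)
  qed
qed

lemma div_pred_eq_div: "\<not> q dvd n \<Longrightarrow> (n - 1) div q = n div q" for n q :: nat
  by (cases n) (auto simp: div_Suc dvd_eq_mod_eq_0)

lemma horiz_step_grid:
  assumes "0 < h" "(e, f) \<in> horiz_step (grid h D)"
  shows "fst f = fst e \<and> snd f = snd e + 2 \<and> (even (snd e) \<longrightarrow> grid_row h f = grid_row h e)"
proof -
  obtain m where succ: "(e, m) \<in> proc_succ (grid h D)" "(m, f) \<in> proc_succ (grid h D)"
    and m: "m \<in> events (grid h D)" "lab (grid h D) m \<noteq> B"
    using assms(2) by (auto simp: horiz_step_def)
  then obtain p n where e: "e = (p, n)" "1 \<le> n" and f: "f = (p, n + 2)" and "m = (p, n + 1)"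
    by (auto simp: proc_succ_grid)
  with m have separator: "grid_label h D (p, n + 1) \<noteq> B"
    by (simp add: lab_grid)
  have "(n + 1) div (8 * h) = (n - 1) div (8 * h)" if "even n"
  proof -
    have "\<not> 8 * h dvd n + 1"
      using \<open>even n\<close> dvd_trans[of 2 "8 * h" "n + 1"] by auto
    then have "(n + 1) div (8 * h) = n div (8 * h)"
      using div_pred_eq_div[of "8 * h" "n + 1"] by simp
    also have "\<dots> = (n - 1) div (8 * h)"
      using separator \<open>even n\<close> div_pred_eq_div[of "8 * h" n]
      by (auto simp: grid_label_def dvd_eq_mod_eq_0 split: if_splits)
    finally show ?thesis .
  qed
  then show ?thesis
    using e f by (simp add: grid_row_def)
qed

lemma rtrancl_vert_step_grid:
  assumes "0 < h" "(e, f) \<in> (vert_step (grid h D))\<^sup>*" "e \<noteq> f"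
  shows "even (snd e) \<and> even (snd f) \<and> grid_col h f = grid_col h e"
  using assms(2,3)
  by (induction rule: rtrancl_induct) (use vert_step_grid[OF assms(1)] in fastforce)+

lemma rtrancl_horiz_step_grid:
  assumes "0 < h" "(e, f) \<in> (horiz_step (grid h D))\<^sup>*"
  shows "(even (snd f) \<longleftrightarrow> even (snd e)) \<and> (even (snd e) \<longrightarrow> grid_row h f = grid_row h e)"
  using assms(2)
  by (induction rule: rtrancl_induct) (use horiz_step_grid[OF assms(1)] in auto)

lemma comparable_vert_step_grid:
  assumes "0 < h" "comparable (vert_step (grid h D)) e f" "e \<noteq> f"
  shows "even (snd e) \<and> grid_col h e = grid_col h f"
  using assms rtrancl_vert_step_grid[OF assms(1)] unfolding comparable_def by metis

lemma comparable_horiz_step_grid: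
  assumes "0 < h" "comparable (horiz_step (grid h D)) e f" "even (snd f)"
  shows "even (snd e) \<and> grid_row h e = grid_row h f"
  using assms rtrancl_horiz_step_grid[OF assms(1)] unfolding comparable_def by metis

lemma sat_symmetry_formula_grid:
  assumes h: "0 < h" and no_C: "\<And>r j. D r j \<noteq> C" and symmetric: "\<And>r j. D r j = D j r"
  shows "sat (grid h D) \<nu> \<mu> symmetry_formula"
  unfolding sat_symmetry_formula
proof clarify
  let ?M = "grid h D"
  fix x y z z' assume events: "x \<in> events ?M" "y \<in> events ?M" "z \<in> events ?M" "z' \<in> events ?M"
    and pair: "transposed_pair ?M x y z z'"
  note pair = pair[unfolded transposed_pair_def]
  have z: "even (snd z)" "grid_row h z = grid_col h z"
    using lab_grid_C_diagonal[OF no_C events(3)] pair by auto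
  have z': "even (snd z')" "grid_row h z' = grid_col h z'"
    using lab_grid_C_diagonal[OF no_C events(4)] pair by auto
  have distinct: "x \<noteq> z" "y \<noteq> z'"
    using pair by auto
  have x: "even (snd x)" "grid_col h x = grid_col h z" "grid_row h x = grid_row h z'"
    using comparable_vert_step_grid[OF h, of D x z] comparable_horiz_step_grid[OF h, of D x z']
      distinct z' pair by auto
  have y: "even (snd y)" "grid_col h y = grid_col h z'" "grid_row h y = grid_row h z"
    using comparable_vert_step_grid[OF h, of D y z'] comparable_horiz_step_grid[OF h, of D y z]
      distinct z pair by auto
  have "lab ?M x = D (grid_row h x) (grid_col h x)"
    using lab_grid_even_position[OF events(1) x(1)] pair by simp
  also have "\<dots> = D (grid_row h y) (grid_col h y)"
    using x y z z' symmetric by simp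
  also have "\<dots> = lab ?M y"
    using lab_grid_even_position[OF events(2) y(1)] pair by simp
  finally have "lab ?M x = lab ?M y" .
  with pair show False by auto
qed

lemma rtrancl_chain:
  assumes "\<And>i. Suc i < N \<Longrightarrow> (f i, f (Suc i)) \<in> R" "i \<le> k" "k < N"
  shows "(f i, f k) \<in> R\<^sup>*"
  using assms(2,3)
proof (induction k)
  case (Suc k)
  then show ?case
    using assms(1)[of k]
    by (metis le_Suc_eq Suc_lessD rtrancl.rtrancl_into_rtrancl rtrancl.rtrancl_refl)
qed simp

lemma comparable_chain:
  assumes "\<And>i. Suc i < N \<Longrightarrow> (f i, f (Suc i)) \<in> R" "i < N" "k < N"
  shows "comparable R (f i) (f k)"
  using rtrancl_chain[of N f R, OF assms(1)] assms(2,3) unfolding comparable_def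
  by (meson less_imp_le nat_le_linear)

definition grid_cell :: "nat \<Rightarrow> nat \<Rightarrow> nat \<Rightarrow> event" where
  "grid_cell h r j = (if even r then P1 else P2, r div 2 * (8 * h) + 2 * j + 2)"

lemma grid_cell_bound:
  assumes "r < 4 * h" "j < 4 * h"
  shows "r div 2 * (8 * h) + 2 * j + 2 \<le> grid_len h"
proof -
  have "r div 2 + 1 \<le> 2 * h"
    using assms(1) by linarith
  then have "r div 2 * (8 * h) + 8 * h \<le> 2 * h * (8 * h)"
    using mult_le_mono1[of "r div 2 + 1" "2 * h" "8 * h"] by simp
  with assms(2) show ?thesis
    by (simp add: grid_len_def)
qed

lemma grid_cell_in_events: "r < 4 * h \<Longrightarrow> j < 4 * h \<Longrightarrow> grid_cell h r j \<in> events (grid h D)"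
  using grid_cell_bound[of r h j] by (simp add: grid_cell_def events_grid)

lemma grid_cell_coords:
  assumes "j < 4 * h"
  shows "grid_row h (grid_cell h r j) = r \<and> grid_col h (grid_cell h r j) = j \<and>
    even (snd (grid_cell h r j))"
proof -
  have pos: "snd (grid_cell h r j) - 1 = (2 * j + 1) + r div 2 * (8 * h)"
    by (simp add: grid_cell_def)
  have "2 * j + 1 < 8 * h"
    using assms by simp
  then have "(snd (grid_cell h r j) - 1) div (8 * h) = r div 2"
    and "(snd (grid_cell h r j) - 1) mod (8 * h) = 2 * j + 1"
    unfolding pos by (subst div_mult_self1 mod_mult_self1; simp)+
  then show ?thesis
    by (auto simp: grid_row_def grid_col_def grid_cell_def)
qed

lemma lab_grid_cell:
  assumes "r < 4 * h" "j < 4 * h"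
  shows "lab (grid h D) (grid_cell h r j) = (if r = j then C else D r j)"
  using grid_cell_coords[OF assms(2), of r] grid_cell_in_events[OF assms]
  by (simp add: lab_grid grid_label_def)

lemma vert_step_grid_cell:
  assumes "0 < h" "Suc r < 4 * h" "j < 4 * h"
  shows "(grid_cell h r j, grid_cell h (Suc r) j) \<in> vert_step (grid h D)"
proof -
  let ?n = "r div 2 * (8 * h) + 2 * j + 2"
  have events: "grid_cell h r j \<in> events (grid h D)" "grid_cell h (Suc r) j \<in> events (grid h D)"
    using grid_cell_in_events assms by auto
  have bound: "?n \<le> grid_len h"
    using grid_cell_bound[of r h j] assms by simp
  show ?thesis
  proof (cases "even r")
    case True
    then have cells: "grid_cell h r j = (P1, ?n)" "grid_cell h (Suc r) j = (P2, ?n)"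
      by (auto simp: grid_cell_def)
    have "((P1, ?n), (P2, ?n - 1)) \<in> grid_edges h C1"
      "((P2, ?n - 1), (P2, ?n)) \<in> proc_succ (grid h D)" "(P2, ?n - 1) \<in> events (grid h D)"
      using bound by (auto simp: grid_edges_C1 proc_succ_grid events_grid)
    then show ?thesis
      unfolding vert_step_def using events cells by (auto simp del: One_nat_def)
  next
    case False
    then have cells: "grid_cell h r j = (P2, ?n)" "grid_cell h (Suc r) j = (P1, ?n + 8 * h)"
      by (auto simp: grid_cell_def)
    have "?n + 8 * h \<le> grid_len h"
      using events cells by (simp add: events_grid)
    then have "((P2, ?n), (P1, ?n + 8 * h - 1)) \<in> grid_edges h C2"
      "((P1, ?n + 8 * h - 1), (P1, ?n + 8 * h)) \<in> proc_succ (grid h D)"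
      "(P1, ?n + 8 * h - 1) \<in> events (grid h D)"
      using assms(1) by (auto simp: grid_edges_C2 proc_succ_grid events_grid)
    then show ?thesis
      unfolding vert_step_def using events cells by (auto simp del: One_nat_def)
  qed
qed

lemma horiz_step_grid_cell:
  assumes "r < 4 * h" "Suc j < 4 * h"
  shows "(grid_cell h r j, grid_cell h r (Suc j)) \<in> horiz_step (grid h D)"
proof -
  let ?p = "if even r then P1 else P2" and ?n = "r div 2 * (8 * h) + 2 * j + 2"
  have events: "grid_cell h r j \<in> events (grid h D)" "grid_cell h r (Suc j) \<in> events (grid h D)"
    using grid_cell_in_events assms by auto
  have cells: "grid_cell h r j = (?p, ?n)" "grid_cell h r (Suc j) = (?p, ?n + 2)"
    by (simp_all add: grid_cell_def)
  have "?n + 2 \<le> grid_len h"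
    using events cells by (simp add: events_grid)
  then have succ: "((?p, ?n), (?p, ?n + 1)) \<in> proc_succ (grid h D)"
    "((?p, ?n + 1), (?p, ?n + 2)) \<in> proc_succ (grid h D)" and m: "(?p, ?n + 1) \<in> events (grid h D)"
    by (auto simp: proc_succ_grid events_grid)
  have "?n + 1 - 1 = (2 * j + 2) + r div 2 * (8 * h)"
    by simp
  moreover have "2 * j + 2 < 8 * h"
    using assms(2) by simp
  ultimately have "(?n + 1 - 1) mod (8 * h) = 2 * j + 2"
    by (metis mod_less mod_mult_self1)
  then have "lab (grid h D) (?p, ?n + 1) = A"
    using m by (simp add: lab_grid grid_label_def)
  then show ?thesis
    unfolding horiz_step_def using events cells succ m by auto
qed

lemma comparable_vert_step_grid_cell:
  "0 < h \<Longrightarrow> r < 4 * h \<Longrightarrow> r' < 4 * h \<Longrightarrow> j < 4 * h \<Longrightarrow>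
     comparable (vert_step (grid h D)) (grid_cell h r j) (grid_cell h r' j)"
  using comparable_chain[of "4 * h" "\<lambda>r. grid_cell h r j"] vert_step_grid_cell by blast

lemma comparable_horiz_step_grid_cell:
  "r < 4 * h \<Longrightarrow> j < 4 * h \<Longrightarrow> j' < 4 * h \<Longrightarrow>
     comparable (horiz_step (grid h D)) (grid_cell h r j) (grid_cell h r j')"
  using comparable_chain[of "4 * h" "grid_cell h r"] horiz_step_grid_cell by blast

lemma not_sat_symmetry_formula_grid:
  assumes h: "0 < h" and ij: "i < 4 * h" "j < 4 * h" and D: "D i j = A" "D j i = B"
  shows "\<not> sat (grid h D) \<nu> \<mu> symmetry_formula"
proof -
  let ?M = "grid h D"
  have "i \<noteq> j"
    using D by auto
  then have
    "transposed_pair ?M (grid_cell h i j) (grid_cell h j i) (grid_cell h j j) (grid_cell h i i)"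
    unfolding transposed_pair_def
    using D ij lab_grid_cell comparable_vert_step_grid_cell[OF h] comparable_horiz_step_grid_cell
    by simp
  moreover have "grid_cell h r j' \<in> events ?M" if "r \<in> {i, j}" "j' \<in> {i, j}" for r j'
    using that ij grid_cell_in_events by auto
  ultimately show ?thesis
    unfolding sat_symmetry_formula by blast
qed

section \<open>Splicing runs\<close>

lemma pre_loc_splice:
  assumes "0 < K" "\<And>p. \<rho>1 (p, K) = \<rho>2 (p, K)"
  shows "pre_loc S (\<lambda>e. if snd e \<le> K then \<rho>1 e else \<rho>2 e) e =
    (if snd e \<le> K then pre_loc S \<rho>1 e else pre_loc S \<rho>2 e)"
  using assms by (cases "snd e = K + 1") (auto simp: pre_loc_def)

lemma edge_in_events:
  assumes "is_cbm M" "(e, f) \<in> edges M d"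
  shows "e \<in> events M" "f \<in> events M"
  using assms unfolding is_cbm_def events_of_def by blast+

lemma is_run_splice:
  assumes K: "0 < K" and cut: "\<And>p. \<rho>1 (p, K) = \<rho>2 (p, K)" and M: "is_cbm M"
    and events: "events M1 = events M" "events M2 = events M"
    and edges: "edges M1 = edges M" "edges M2 = edges M"
    and lab: "\<And>e. e \<in> events M \<Longrightarrow> lab M e = (if snd e \<le> K then lab M1 e else lab M2 e)"
    and run1: "is_run S M1 \<rho>1" and run2: "is_run S M2 \<rho>2"
    and forward: "\<And>d e f. (e, f) \<in> edges M d \<Longrightarrow> snd f \<le> K \<Longrightarrow> snd e \<le> K"
    and crossing: "\<And>d e f. (e, f) \<in> edges M d \<Longrightarrow> snd e \<le> K \<Longrightarrow> K < snd f \<Longrightarrow>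
      \<exists>v. (pre_loc S \<rho>1 e, lab M1 e, Send d v, \<rho>1 e) \<in> trans S (fst e) \<and>
          (pre_loc S \<rho>2 f, lab M2 f, Recv d v, \<rho>2 f) \<in> trans S (fst f)"
  shows "is_run S M (\<lambda>e. if snd e \<le> K then \<rho>1 e else \<rho>2 e)" (is "is_run S M ?\<rho>")
proof -
  note pre_loc = pre_loc_splice[of K \<rho>1 \<rho>2, OF K cut]
  show ?thesis
    unfolding is_run_def
  proof (intro conjI ballI allI impI)
    fix e assume "e \<in> events M"
    then show "?\<rho> e \<in> locs S"
      using run1 run2 events by (simp add: is_run_def)
  next
    fix e assume e: "e \<in> events M" and "\<nexists>d f. (e, f) \<in> edges M d \<or> (f, e) \<in> edges M d"
    then have "(pre_loc S \<rho>1 e, lab M1 e, Internal, \<rho>1 e) \<in> trans S (fst e)"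
      and "(pre_loc S \<rho>2 e, lab M2 e, Internal, \<rho>2 e) \<in> trans S (fst e)"
      using run1 run2 events edges by (auto simp: is_run_def)
    then show "(pre_loc S ?\<rho> e, lab M e, Internal, ?\<rho> e) \<in> trans S (fst e)"
      using lab[OF e] pre_loc by simp
  next
    fix d e f assume edge: "(e, f) \<in> edges M d"
    then have lab_ef: "lab M e = (if snd e \<le> K then lab M1 e else lab M2 e)"
      "lab M f = (if snd f \<le> K then lab M1 f else lab M2 f)"
      using lab edge_in_events[OF M] by blast+
    have "\<exists>v. (pre_loc S \<rho>1 e, lab M1 e, Send d v, \<rho>1 e) \<in> trans S (fst e) \<and>
        (pre_loc S \<rho>1 f, lab M1 f, Recv d v, \<rho>1 f) \<in> trans S (fst f)"
      and "\<exists>v. (pre_loc S \<rho>2 e, lab M2 e, Send d v, \<rho>2 e) \<in> trans S (fst e) \<and>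
        (pre_loc S \<rho>2 f, lab M2 f, Recv d v, \<rho>2 f) \<in> trans S (fst f)"
      using run1 run2 edge unfolding is_run_def edges by blast+
    then show "\<exists>v. (pre_loc S ?\<rho> e, lab M e, Send d v, ?\<rho> e) \<in> trans S (fst e) \<and>
        (pre_loc S ?\<rho> f, lab M f, Recv d v, ?\<rho> f) \<in> trans S (fst f)"
      using crossing[OF edge] forward[OF edge] lab_ef pre_loc
      by (cases "snd e \<le> K"; cases "snd f \<le> K") auto
  qed
qed

lemma accepting_splice:
  assumes "\<And>p. K < length (words M p)" "\<And>p. length (words M2 p) = length (words M p)"
    and "accepting S M2 \<rho>2"
  shows "accepting S M (\<lambda>e. if snd e \<le> K then \<rho>1 e else \<rho>2 e)"
proof -
  have "words M p \<noteq> [] \<and> words M2 p \<noteq> [] \<and> \<not> length (words M p) \<le> K" for p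
    using assms(1)[of p] assms(2)[of p] by auto
  then show ?thesis
    using assms(2,3) by (simp add: accepting_def)
qed

text \<open>Off an edge, the value is an arbitrary element of \<open>vals S\<close>; this keeps the values
  inside a finite set.\<close>

definition msg_val :: "cpds \<Rightarrow> cbm \<Rightarrow> (event \<Rightarrow> nat) \<Rightarrow> ds \<Rightarrow> event \<Rightarrow> event \<Rightarrow> nat" where
  "msg_val S M \<rho> d e f = (SOME v. v \<in> vals S \<and> ((e, f) \<in> edges M d \<longrightarrow>
     (pre_loc S \<rho> e, lab M e, Send d v, \<rho> e) \<in> trans S (fst e) \<and>
     (pre_loc S \<rho> f, lab M f, Recv d v, \<rho> f) \<in> trans S (fst f)))"

lemma msg_val:
  assumes "is_cpds S" "is_run S M \<rho>"
  shows "msg_val S M \<rho> d e f \<in> vals S \<and> ((e, f) \<in> edges M d \<longrightarrow>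
     (pre_loc S \<rho> e, lab M e, Send d (msg_val S M \<rho> d e f), \<rho> e) \<in> trans S (fst e) \<and>
     (pre_loc S \<rho> f, lab M f, Recv d (msg_val S M \<rho> d e f), \<rho> f) \<in> trans S (fst f))"
  unfolding msg_val_def
proof (rule someI_ex)
  obtain v0 where "v0 \<in> vals S"
    using assms(1) by (auto simp: is_cpds_def)
  moreover have "\<exists>v. (pre_loc S \<rho> e, lab M e, Send d v, \<rho> e) \<in> trans S (fst e) \<and>
      (pre_loc S \<rho> f, lab M f, Recv d v, \<rho> f) \<in> trans S (fst f)" if "(e, f) \<in> edges M d"
    using assms(2) that unfolding is_run_def by blast
  ultimately show "\<exists>v. v \<in> vals S \<and> ((e, f) \<in> edges M d \<longrightarrow>
     (pre_loc S \<rho> e, lab M e, Send d v, \<rho> e) \<in> trans S (fst e) \<and>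
     (pre_loc S \<rho> f, lab M f, Recv d v, \<rho> f) \<in> trans S (fst f))"
    using assms(1) unfolding is_cpds_def by blast
qed

definition grid_cut :: "nat \<Rightarrow> nat" where
  "grid_cut h = h * (8 * h)"

definition cut_window :: "nat \<Rightarrow> nat set" where
  "cut_window h = {grid_cut h - 8 * h<..grid_cut h}"

definition splice_rows :: "nat \<Rightarrow> (nat \<Rightarrow> nat \<Rightarrow> sym) \<Rightarrow> (nat \<Rightarrow> nat \<Rightarrow> sym) \<Rightarrow> nat \<Rightarrow> nat \<Rightarrow> sym" where
  "splice_rows h D1 D2 r j = (if r < 2 * h then D1 r j else D2 r j)"

lemma grid_row_less_iff:
  assumes "0 < h" "1 \<le> snd e"
  shows "grid_row h e < 2 * h \<longleftrightarrow> snd e \<le> grid_cut h"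
proof -
  have "(snd e - 1) div (8 * h) < h \<longleftrightarrow> snd e - 1 < h * (8 * h)"
    using assms(1) div_less_iff_less_mult[of "8 * h" "snd e - 1" h] by (simp add: mult.commute)
  with assms(2) show ?thesis
    by (auto simp: grid_row_def grid_cut_def)
qed

lemma lab_grid_splice_rows:
  assumes "0 < h" "e \<in> events (grid h (splice_rows h D1 D2))"
  shows "lab (grid h (splice_rows h D1 D2)) e =
    (if snd e \<le> grid_cut h then lab (grid h D1) e else lab (grid h D2) e)"
  using assms grid_row_less_iff[OF assms(1), of e]
  by (auto simp: lab_grid events_grid grid_label_def splice_rows_def)

lemma grid_edge_forward:
  assumes "0 < h" "(e, f) \<in> grid_edges h d" "snd f \<le> grid_cut h"
  shows "snd e \<le> grid_cut h"
proof (cases d)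
  case C1
  with assms obtain n where "e = (P1, n)" "f = (P2, n - 1)" "even n" "n - 1 \<le> h * (8 * h)"
    by (auto simp: grid_edges_C1 grid_cut_def)
  moreover have "n \<noteq> h * (8 * h) + 1"
    using \<open>even n\<close> by auto
  ultimately show ?thesis
    by (simp add: grid_cut_def)
next
  case C2
  with assms show ?thesis
    by (auto simp: grid_edges_C2)
qed

lemma grid_edge_crossing:
  assumes "(e, f) \<in> grid_edges h d" "snd e \<le> grid_cut h" "grid_cut h < snd f"
  shows "d = C2 \<and> (\<exists>n\<in>cut_window h. e = (P2, n) \<and> f = (P1, n + 8 * h - 1))"
  using assms by (cases d) (auto simp: grid_edges_C1 grid_edges_C2 cut_window_def)

text \<open>What a run of a grid has to remember across the cut between its upper and lower half:
  the two locations at the cut and the values of the \<open>C2\<close> messages crossing it.\<close>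

definition cut_config ::
  "cpds \<Rightarrow> nat \<Rightarrow> (nat \<Rightarrow> nat \<Rightarrow> sym) \<Rightarrow> (event \<Rightarrow> nat) \<Rightarrow> nat \<times> nat \<times> (nat \<Rightarrow> nat)" where
  "cut_config S h D \<rho> = (\<rho> (P1, grid_cut h), \<rho> (P2, grid_cut h),
     restrict (\<lambda>n. msg_val S (grid h D) \<rho> C2 (P2, n) (P1, n + 8 * h - 1)) (cut_window h))"

lemma grid_splice_rows_in_lang_cpds:
  assumes S: "is_cpds S" and h: "0 < h"
    and run1: "is_run S (grid h D1) \<rho>1" and run2: "is_run S (grid h D2) \<rho>2"
    and accepting: "accepting S (grid h D2) \<rho>2"
    and config: "cut_config S h D1 \<rho>1 = cut_config S h D2 \<rho>2"
  shows "grid h (splice_rows h D1 D2) \<in> lang_cpds S"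
proof -
  let ?M = "grid h (splice_rows h D1 D2)" and ?K = "grid_cut h"
  have cut: "\<rho>1 (p, ?K) = \<rho>2 (p, ?K)" for p
    using config by (cases p) (simp_all add: cut_config_def)
  have crossing: "\<exists>v. (pre_loc S \<rho>1 e, lab (grid h D1) e, Send d v, \<rho>1 e) \<in> trans S (fst e) \<and>
      (pre_loc S \<rho>2 f, lab (grid h D2) f, Recv d v, \<rho>2 f) \<in> trans S (fst f)"
    if edge: "(e, f) \<in> edges ?M d" "snd e \<le> ?K" "?K < snd f" for d e f
  proof -
    obtain n where "d = C2" "n \<in> cut_window h" and ef: "e = (P2, n)" "f = (P1, n + 8 * h - 1)"
      using grid_edge_crossing[of e f h d] edge by auto
    then have "msg_val S (grid h D1) \<rho>1 d e f = msg_val S (grid h D2) \<rho>2 d e f"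
      using config by (auto simp: cut_config_def dest!: fun_cong[where x = n])
    then show ?thesis
      using msg_val[OF S run1, of d e f] msg_val[OF S run2, of d e f] edge by auto
  qed
  let ?\<rho> = "\<lambda>e. if snd e \<le> ?K then \<rho>1 e else \<rho>2 e"
  have "is_run S ?M ?\<rho>"
    by (rule is_run_splice[OF _ cut is_cbm_grid[OF h] _ _ _ _ lab_grid_splice_rows[OF h] run1 run2 _
          crossing])
      (use h grid_edge_forward[OF h] in \<open>simp_all add: events_grid grid_cut_def\<close>)
  moreover have "accepting S ?M ?\<rho>"
    by (rule accepting_splice[OF _ _ accepting])
      (use h in \<open>simp_all add: words_grid grid_cut_def grid_len_def\<close>)
  ultimately show ?thesis
    using is_cbm_grid[OF h] by (auto simp: lang_cpds_def)
qed

section \<open>Counting\<close>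

lemma cut_config_mem:
  assumes S: "is_cpds S" and h: "0 < h" and run: "is_run S (grid h D) \<rho>"
  shows "cut_config S h D \<rho> \<in> locs S \<times> locs S \<times> (cut_window h \<rightarrow>\<^sub>E vals S)"
proof -
  have "(p, grid_cut h) \<in> events (grid h D)" for p
    using h by (simp add: events_grid grid_cut_def grid_len_def)
  then show ?thesis
    using run msg_val[OF S run] by (auto simp: cut_config_def is_run_def)
qed

lemma card_cut_configs:
  assumes "is_cpds S" "0 < h"
  shows "card (locs S \<times> locs S \<times> (cut_window h \<rightarrow>\<^sub>E vals S)) =
    card (locs S) * card (locs S) * card (vals S) ^ (8 * h)"
proof -
  have "card (cut_window h) = 8 * h"
    using assms(2) by (simp add: cut_window_def grid_cut_def)
  then show ?thesis
    using assms(1) by (simp add: is_cpds_def card_cartesian_product card_PiE cut_window_def)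
qed

lemma sq_mult_pow_less_pow2:
  fixes a b h :: nat
  assumes "1 \<le> a" "1 \<le> b" "2 * (a + b) \<le> h"
  shows "a * a * b ^ (8 * h) < 2 ^ ((2 * h) * (2 * h))"
proof -
  have "a * a * b ^ (8 * h) < 2 ^ a * 2 ^ a * (2 ^ b) ^ (8 * h)"
    using assms(2) by (intro mult_less_le_imp_less mult_strict_mono less_exp power_mono) simp_all
  also have "\<dots> = 2 ^ (a + a + b * (8 * h))"
    by (simp only: power_add power_mult)
  also have "\<dots> \<le> 2 ^ ((2 * h) * (2 * h))"
  proof (rule power_increasing)
    have "a + a + b * (8 * h) \<le> 4 * h * (2 * (a + b))"
      using assms by (simp add: algebra_simps)
    also have "\<dots> \<le> (2 * h) * (2 * h)"
      using assms(3) by simp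
    finally show "a + a + b * (8 * h) \<le> (2 * h) * (2 * h)" .
  qed simp
  finally show ?thesis .
qed

definition quadrant :: "nat \<Rightarrow> (nat \<times> nat) set" where
  "quadrant h = {..<2 * h} \<times> {2 * h..<4 * h}"

definition sym_matrix :: "(nat \<times> nat) set \<Rightarrow> nat \<Rightarrow> nat \<Rightarrow> sym" where
  "sym_matrix X r j = (if (r, j) \<in> X \<or> (j, r) \<in> X then B else A)"

lemma grid_sym_matrix_in_lang_mso: "0 < h \<Longrightarrow> grid h (sym_matrix X) \<in> lang_mso symmetry_formula"
  using sat_symmetry_formula_grid[of h "sym_matrix X"] is_cbm_grid
  by (auto simp: lang_mso_def sym_matrix_def)

lemma grid_splice_sym_matrix_notin_lang_mso:
  assumes h: "0 < h" and X: "X1 \<subseteq> quadrant h" "X2 \<subseteq> quadrant h"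
    and ij: "(i, j) \<in> quadrant h" "(i, j) \<in> X1 \<longleftrightarrow> (i, j) \<notin> X2"
  shows "grid h (splice_rows h (sym_matrix X1) (sym_matrix X2)) \<notin> lang_mso symmetry_formula"
proof -
  let ?D = "splice_rows h (sym_matrix X1) (sym_matrix X2)"
  have "?D i j = (if (i, j) \<in> X1 then B else A)" "?D j i = (if (i, j) \<in> X2 then B else A)"
    using X ij(1) by (auto simp: splice_rows_def sym_matrix_def quadrant_def)
  then have "\<not> sat (grid h ?D) \<nu> \<mu> symmetry_formula" for \<nu> \<mu>
    using ij not_sat_symmetry_formula_grid[OF h, of i j ?D]
      not_sat_symmetry_formula_grid[OF h, of j i ?D]
    by (auto simp: quadrant_def split: if_splits)
  then show ?thesis
    by (simp add: lang_mso_def)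
qed

lemma accepted_spliced_grid:
  assumes S: "is_cpds S" and h: "h = 2 * (card (locs S) + card (vals S))"
    and accepted: "\<And>X. grid h (sym_matrix X) \<in> lang_cpds S"
  obtains X1 X2 where "X1 \<subseteq> quadrant h" "X2 \<subseteq> quadrant h" "X1 \<noteq> X2" "grid h (splice_rows h (sym_matrix X1) (sym_matrix X2)) \<in> lang_cpds S"
proof -
  let ?Q = "quadrant h"
  let ?configs = "locs S \<times> locs S \<times> (cut_window h \<rightarrow>\<^sub>E vals S)"
  have card_pos: "1 \<le> card (locs S)" "1 \<le> card (vals S)"
    using S by (auto simp: is_cpds_def Suc_le_eq card_gt_0_iff)
  then have h_pos: "0 < h"
    using h by simp
  have "\<forall>X. \<exists>\<rho>. is_run S (grid h (sym_matrix X)) \<rho> \<and> accepting S (grid h (sym_matrix X)) \<rho>"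
    using accepted by (simp add: lang_cpds_def)
  then obtain \<rho> where
    \<rho>: "\<forall>X. is_run S (grid h (sym_matrix X)) (\<rho> X) \<and> accepting S (grid h (sym_matrix X)) (\<rho> X)"
    by (metis choice)
  let ?config = "\<lambda>X. cut_config S h (sym_matrix X) (\<rho> X)"
  have "finite ?configs"
    using S by (simp add: is_cpds_def finite_PiE cut_window_def)
  moreover have "?config ` Pow ?Q \<subseteq> ?configs"
    using cut_config_mem[OF S h_pos] \<rho> by blast
  ultimately have "card (?config ` Pow ?Q) \<le> card ?configs"
    by (rule card_mono)
  also have "\<dots> = card (locs S) * card (locs S) * card (vals S) ^ (8 * h)"
    by (rule card_cut_configs[OF S h_pos])
  also have "\<dots> < 2 ^ ((2 * h) * (2 * h))"
    using sq_mult_pow_less_pow2[OF card_pos, of h] h by simp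
  also have "\<dots> = card (Pow ?Q)"
    by (simp add: card_Pow card_cartesian_product quadrant_def)
  finally obtain X1 X2 where "X1 \<in> Pow ?Q" "X2 \<in> Pow ?Q" "X1 \<noteq> X2" "?config X1 = ?config X2"
    using pigeonhole[of ?config "Pow ?Q"] unfolding inj_on_def by blast
  then show ?thesis
    using that \<rho>
      grid_splice_rows_in_lang_cpds[OF S h_pos, of "sym_matrix X1" "\<rho> X1" "sym_matrix X2" "\<rho> X2"]
    by blast
qed

lemma lang_cpds_neq_symmetry_formula:
  assumes S: "is_cpds S"
  shows "lang_cpds S \<noteq> lang_mso symmetry_formula"
proof
  assume eq: "lang_cpds S = lang_mso symmetry_formula"
  define h where "h = 2 * (card (locs S) + card (vals S))"
  have h_pos: "0 < h"
    using S by (auto simp: h_def is_cpds_def card_gt_0_iff)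
  obtain X1 X2 where X: "X1 \<subseteq> quadrant h" "X2 \<subseteq> quadrant h" and "X1 \<noteq> X2"
    and spliced: "grid h (splice_rows h (sym_matrix X1) (sym_matrix X2)) \<in> lang_cpds S"
    using accepted_spliced_grid[OF S h_def] grid_sym_matrix_in_lang_mso[OF h_pos] eq by metis
  then obtain i j where "(i, j) \<in> quadrant h" "(i, j) \<in> X1 \<longleftrightarrow> (i, j) \<notin> X2"
    by (metis subsetD subset_antisym subsetI surj_pair)
  with spliced eq show False
    using grid_splice_sym_matrix_notin_lang_mso[OF h_pos X] by blast
qed

theorem mainTheorem2:
  shows "\<exists>\<phi>. sentence \<phi> \<and> (\<forall>S. is_cpds S \<longrightarrow> lang_cpds S \<noteq> lang_mso \<phi>)"
  using sentence_symmetry_formula lang_cpds_neq_symmetry_formula by blast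

end
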